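(* Let $f_d:\mathbb{R}^n\times\mathbb{R}^m\to\mathbb{R}^n$ and $g_d:\mathbb{R}^n\times\mathbb{R}^m\to\mathbb{R}$ be of class $C^1$, $\tau>0$, and $H_d(x,p,u)=g_d(x,u)+\langle p,f_d(x,u)\rangle$. Writing $x^d_k=\frac{x_{k+1}+x_k}{2}$, $p^d_k=\frac{p_{k+1}+p_k}{2}$, $u^d_k=\frac{u_{k+1}+u_k}{2}$, consider the midpoint discrete necessary conditions for optimality $$\frac{x_{k+1}-x_k}{\tau}=D_2H_d(x^d_k,p^d_k,u^d_k),\quad \frac{p_{k+1}-p_k}{\tau}=-D_1H_d(x^d_k,p^d_k,u^d_k),\quad 0=D_3H_d(x^d_k,p^d_k,u^d_k).$$ Let $W\subset\mathbb{R}^{2n}$ be open and let $F:W\to\mathbb{R}^{2n}$ and $w:W\to\mathbb{R}^m$ be $C^1$ maps such that for every $(x_k,p_k)\in W$, with $(x_{k+1},p_{k+1})=F(x_k,p_k)$ and $u^d_k=w(x_k,p_k)$, these equations hold. Then $F$ is symplectic: $F^*\big(\sum_i dp_i\wedge dx^i\big)=\sum_i dp_i\wedge dx^i$.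
   Context: These equations arise from the discrete optimal control problem of minimizing $\sum_{k=0}^{n-1}g_d(x^d_k,u^d_k)\tau$ subject to $(x_{k+1}-x_k)/\tau=f_d(x^d_k,u^d_k)$, using the midpoint discretization. *)

theory Defs
  imports "HOL-Analysis.Analysis"
begin

definition C1_on :: "'a::real_normed_vector set \<Rightarrow> ('a \<Rightarrow> 'b::real_normed_vector) \<Rightarrow> bool" where
  "C1_on S f \<longleftrightarrow> (\<exists>f'. (\<forall>z\<in>S. (f has_derivative blinfun_apply (f' z)) (at z)) \<and> continuous_on S f')"

definition Hd :: "((real^'n) \<times> (real^'m) \<Rightarrow> real^'n) \<Rightarrow> ((real^'n) \<times> (real^'m) \<Rightarrow> real)
    \<Rightarrow> real^'n \<Rightarrow> real^'n \<Rightarrow> real^'m \<Rightarrow> real" where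
  "Hd f g x p u = g (x, u) + p \<bullet> f (x, u)"

text \<open>The canonical two-form sum_i dp_i /\ dx^i on R^{2n} with coordinates (x,p):
  evaluated on tangent vectors (a1,b1),(a2,b2) it gives <b1,a2> - <b2,a1>.\<close>
definition omega :: "(real^'n) \<times> (real^'n) \<Rightarrow> (real^'n) \<times> (real^'n) \<Rightarrow> real" where
  "omega v w = snd v \<bullet> fst w - snd w \<bullet> fst v"

definition symplectic_on :: "((real^'n) \<times> (real^'n)) set \<Rightarrow> ((real^'n) \<times> (real^'n) \<Rightarrow> (real^'n) \<times> (real^'n)) \<Rightarrow> bool" where
  "symplectic_on W F \<longleftrightarrow> (\<forall>z\<in>W. \<forall>v w.
      omega (frechet_derivative F (at z) v) (frechet_derivative F (at z) w) = omega v w)"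

end

theory Submission
  imports Defs
begin

(* Write m y = (F y + y)/2 for the midpoint map and a y = (p - p', x' - x) where y = (x, p) and
   F y = (x', p'). The midpoint conditions say exactly that y \<mapsto> \<tau> H_d(m y, w y) has derivative
   a(y) \<bullet> Dm(y): the control equation removes the contribution of w, so the 1-form a \<bullet> dm is exact.
   An exact form is closed, so Da(v) \<bullet> Dm(u) is symmetric in u and v, and for the midpoint map this
   symmetry is equivalent to DF preserving omega.
   As m is only C^1, closedness comes from the symmetry of a second derivative that exists at a single
   point (Peano's form of Schwarz's theorem, proved with a second difference and the mean value
   theorem), applied to y \<mapsto> \<tau> H_d(m y, w y) - (a z + Da(z)(y - z)) \<bullet> m y. *)

lemma has_real_derivative_along_line:
  assumes "(f has_derivative f') (at (a + s *\<^sub>R v))"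
  shows "((\<lambda>s. f (a + s *\<^sub>R v)) has_real_derivative f' v) (at s)"
proof -
  have "((\<lambda>s. f (a + s *\<^sub>R v)) has_derivative (\<lambda>u. f' (u *\<^sub>R v))) (at s)"
    by (rule has_derivative_compose[where f="\<lambda>s. a + s *\<^sub>R v", OF _ assms])
      (auto intro!: derivative_eq_intros)
  moreover have "(\<lambda>u. f' (u *\<^sub>R v)) = (*) (f' v)"
    using linear_scale[OF has_derivative_linear[OF assms]] by (simp add: fun_eq_iff)
  ultimately show ?thesis
    by (simp add: has_field_derivative_def)
qed

lemma has_derivative_inner_vanishing:
  fixes \<rho> b :: "'a::real_normed_vector \<Rightarrow> 'b::real_inner"
  assumes "(\<rho> has_derivative (\<lambda>_. 0)) (at z)" "\<rho> z = 0" "isCont b z"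
  shows "((\<lambda>y. \<rho> y \<bullet> b y) has_derivative (\<lambda>_. 0)) (at z)"
proof -
  have "((\<lambda>y. \<rho> y /\<^sub>R norm (y - z)) \<longlongrightarrow> 0) (at z)"
    using assms(1,2) by (simp add: has_derivative_at_within)
  then have "((\<lambda>y. (\<rho> y /\<^sub>R norm (y - z)) \<bullet> b y) \<longlongrightarrow> 0 \<bullet> b z) (at z)"
    using assms(3) by (intro tendsto_inner) (auto simp: isCont_def)
  then show ?thesis
    by (simp add: has_derivative_at_within assms(2) bounded_linear_zero)
qed

lemma second_difference_mean_value:
  fixes f :: "'a::real_normed_vector \<Rightarrow> real"
  assumes "0 < t"
    and f': "\<And>y. y \<in> U \<Longrightarrow> (f has_derivative f' y) (at y)"
    and segments: "\<And>s. 0 \<le> s \<Longrightarrow> s \<le> t \<Longrightarrow> z + t *\<^sub>R w + s *\<^sub>R v \<in> U \<and> z + s *\<^sub>R v \<in> U"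
    and bound: "\<And>s. 0 \<le> s \<Longrightarrow> s \<le> t \<Longrightarrow>
      \<bar>f' (z + t *\<^sub>R w + s *\<^sub>R v) v - f' (z + s *\<^sub>R v) v - t * c\<bar> \<le> K"
  shows "\<bar>f (z + t *\<^sub>R w + t *\<^sub>R v) - f (z + t *\<^sub>R w) - f (z + t *\<^sub>R v) + f z - t\<^sup>2 * c\<bar> \<le> t * K"
proof -
  define g where "g s = f (z + t *\<^sub>R w + s *\<^sub>R v) - f (z + s *\<^sub>R v)" for s
  define g' where "g' s = f' (z + t *\<^sub>R w + s *\<^sub>R v) v - f' (z + s *\<^sub>R v) v" for s
  have "(g has_real_derivative g' s) (at s)" if "0 \<le> s" "s \<le> t" for s
    using segments[OF that] unfolding g_def g'_def
    by (intro DERIV_diff has_real_derivative_along_line f') (simp_all add: add.assoc)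
  then obtain \<xi> where \<xi>: "0 < \<xi>" "\<xi> < t" "g t - g 0 = t * g' \<xi>"
    using MVT2[OF \<open>0 < t\<close>, of g g'] by auto
  have "f (z + t *\<^sub>R w + t *\<^sub>R v) - f (z + t *\<^sub>R w) - f (z + t *\<^sub>R v) + f z - t\<^sup>2 * c
      = t * (g' \<xi> - t * c)"
    using \<xi>(3) by (simp add: g_def power2_eq_square algebra_simps)
  also have "\<bar>\<dots>\<bar> \<le> t * K"
    using bound[of \<xi>] \<xi> \<open>0 < t\<close> unfolding g'_def by (simp add: abs_mult mult_left_mono)
  finally show ?thesis .
qed

lemma second_difference_estimate:
  fixes f :: "'a::real_normed_vector \<Rightarrow> real"
  assumes "open U" "z \<in> U"
    and f': "\<And>y. y \<in> U \<Longrightarrow> (f has_derivative f' y) (at y)"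
    and f'': "((\<lambda>y. f' y v) has_derivative (\<lambda>u. f'' u v)) (at z)"
    and "0 < \<epsilon>"
  obtains \<delta> where "0 < \<delta>"
    "\<And>t. 0 < t \<Longrightarrow> t < \<delta> \<Longrightarrow>
      \<bar>f (z + t *\<^sub>R w + t *\<^sub>R v) - f (z + t *\<^sub>R w) - f (z + t *\<^sub>R v) + f z - t\<^sup>2 * f'' w v\<bar> \<le> \<epsilon> * t\<^sup>2"
proof -
  define N where "N = norm v + norm w"
  define e where "e = \<epsilon> / (2 * N + 1)"
  have N: "0 \<le> N" by (simp add: N_def)
  have e: "0 < e" "2 * e * N \<le> \<epsilon>"
    using \<open>0 < \<epsilon>\<close> N by (auto simp: e_def field_simps)
  obtain d where d: "0 < d"
    "\<And>y. norm (y - z) < d \<Longrightarrow> \<bar>f' y v - f' z v - f'' (y - z) v\<bar> \<le> e * norm (y - z)"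
    using f'' \<open>0 < e\<close> unfolding has_derivative_at_alt by force
  obtain r where r: "0 < r" "ball z r \<subseteq> U"
    using assms(1,2) open_contains_ball by blast
  have lin: "linear (\<lambda>u. f'' u v)"
    using f'' by (rule has_derivative_linear)
  show ?thesis
  proof
    show "0 < min d r / (N + 1)"
      using d r N by simp
    fix t assume t: "0 < t" "t < min d r / (N + 1)"
    have tN: "t * N < min d r"
    proof -
      have "t * N \<le> t * (N + 1)" using t by simp
      also have "\<dots> < min d r" using t N by (simp add: field_simps)
      finally show ?thesis .
    qed
    have close: "norm (c *\<^sub>R w + s *\<^sub>R v) \<le> t * N" if "0 \<le> c" "c \<le> t" "0 \<le> s" "s \<le> t" for c s
    proof -
      have "norm (c *\<^sub>R w + s *\<^sub>R v) \<le> c * norm w + s * norm v"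
        using that by (metis abs_of_nonneg norm_scaleR norm_triangle_ineq)
      also have "\<dots> \<le> t * N"
        using that mult_right_mono[of c t "norm w"] mult_right_mono[of s t "norm v"]
        by (simp add: N_def distrib_left)
      finally show ?thesis .
    qed
    have err: "\<bar>f' y v - f' z v - f'' (y - z) v\<bar> \<le> e * (t * N)" if "norm (y - z) \<le> t * N" for y
    proof -
      have "\<bar>f' y v - f' z v - f'' (y - z) v\<bar> \<le> e * norm (y - z)"
        using d(2) that tN by simp
      also have "\<dots> \<le> e * (t * N)"
        using that e(1) by (simp add: mult_left_mono)
      finally show ?thesis .
    qed
    have "\<bar>f (z + t *\<^sub>R w + t *\<^sub>R v) - f (z + t *\<^sub>R w) - f (z + t *\<^sub>R v) + f z - t\<^sup>2 * f'' w v\<bar>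
        \<le> t * (\<epsilon> * t)"
    proof (rule second_difference_mean_value[OF t(1) f'])
      fix s assume s: "0 \<le> s" "s \<le> t"
      let ?p = "z + t *\<^sub>R w + s *\<^sub>R v" and ?q = "z + s *\<^sub>R v"
      have p: "norm (?p - z) \<le> t * N" and q: "norm (?q - z) \<le> t * N"
        using close[of t s] close[of 0 s] s t by (simp_all add: add.assoc)
      have "?p \<in> ball z r" "?q \<in> ball z r"
        using p q tN by (simp_all add: dist_norm norm_minus_commute add_ac)
      then show "?p \<in> U \<and> ?q \<in> U"
        using r(2) by blast
      have "f'' (?p - z) v - f'' (?q - z) v = t * f'' w v"
        using linear_add[OF lin] linear_scale[OF lin] by (simp add: add.assoc)
      then have "\<bar>f' ?p v - f' ?q v - t * f'' w v\<bar>
          = \<bar>(f' ?p v - f' z v - f'' (?p - z) v) - (f' ?q v - f' z v - f'' (?q - z) v)\<bar>"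
        by simp
      also have "\<dots> \<le> e * (t * N) + e * (t * N)"
        using err[OF p] err[OF q] by linarith
      also have "\<dots> \<le> \<epsilon> * t"
        using e(2) t by (simp add: algebra_simps mult_right_mono)
      finally show "\<bar>f' ?p v - f' ?q v - t * f'' w v\<bar> \<le> \<epsilon> * t" .
    qed
    then show "\<bar>f (z + t *\<^sub>R w + t *\<^sub>R v) - f (z + t *\<^sub>R w) - f (z + t *\<^sub>R v) + f z - t\<^sup>2 * f'' w v\<bar>
        \<le> \<epsilon> * t\<^sup>2"
      by (simp add: power2_eq_square algebra_simps)
  qed
qed

lemma second_derivative_symmetric:
  fixes f :: "'a::real_normed_vector \<Rightarrow> real"
  assumes "open U" "z \<in> U"
    and f': "\<And>y. y \<in> U \<Longrightarrow> (f has_derivative f' y) (at y)"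
    and f'': "\<And>v. ((\<lambda>y. f' y v) has_derivative (\<lambda>u. f'' u v)) (at z)"
  shows "f'' v w = f'' w v"
proof -
  have "\<bar>f'' v w - f'' w v\<bar> \<le> 0 + \<epsilon>" if "0 < \<epsilon>" for \<epsilon>
  proof -
    have "0 < \<epsilon> / 2" using that by simp
    obtain \<delta>1 where "0 < \<delta>1" and est1: "\<And>t. 0 < t \<Longrightarrow> t < \<delta>1 \<Longrightarrow>
        \<bar>f (z + t *\<^sub>R w + t *\<^sub>R v) - f (z + t *\<^sub>R w) - f (z + t *\<^sub>R v) + f z - t\<^sup>2 * f'' w v\<bar> \<le> \<epsilon> / 2 * t\<^sup>2"
      using second_difference_estimate[where f''=f'' and v=v and w=w, OF assms(1-3) f'' \<open>0 < \<epsilon> / 2\<close>] by blast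
    obtain \<delta>2 where "0 < \<delta>2" and est2: "\<And>t. 0 < t \<Longrightarrow> t < \<delta>2 \<Longrightarrow>
        \<bar>f (z + t *\<^sub>R v + t *\<^sub>R w) - f (z + t *\<^sub>R v) - f (z + t *\<^sub>R w) + f z - t\<^sup>2 * f'' v w\<bar> \<le> \<epsilon> / 2 * t\<^sup>2"
      using second_difference_estimate[where f''=f'' and v=w and w=v, OF assms(1-3) f'' \<open>0 < \<epsilon> / 2\<close>] by blast
    define t where "t = min \<delta>1 \<delta>2 / 2"
    have t: "0 < t" "t < \<delta>1" "t < \<delta>2"
      using \<open>0 < \<delta>1\<close> \<open>0 < \<delta>2\<close> by (auto simp: t_def)
    have swap: "z + t *\<^sub>R v + t *\<^sub>R w = z + t *\<^sub>R w + t *\<^sub>R v"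
      by (simp add: add_ac)
    have "\<bar>t\<^sup>2 * f'' v w - t\<^sup>2 * f'' w v\<bar> \<le> \<epsilon> * t\<^sup>2"
      using est1[OF t(1,2)] est2[OF t(1,3), unfolded swap] unfolding abs_le_iff by linarith
    then have "t\<^sup>2 * \<bar>f'' v w - f'' w v\<bar> \<le> t\<^sup>2 * \<epsilon>"
      by (metis abs_mult abs_of_nonneg mult.commute right_diff_distrib zero_le_power2)
    then show ?thesis
      using t(1) by simp
  qed
  then show ?thesis
    using field_le_epsilon[of "\<bar>f'' v w - f'' w v\<bar>" 0] by simp
qed

lemma exact_inner_form_closed:
  fixes G :: "'a::real_normed_vector \<Rightarrow> real" and a m :: "'a \<Rightarrow> 'b::real_inner"
  assumes "open U" "z \<in> U"
    and G: "\<And>y. y \<in> U \<Longrightarrow> (G has_derivative (\<lambda>k. a y \<bullet> m' y k)) (at y)"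
    and m: "\<And>y. y \<in> U \<Longrightarrow> (m has_derivative m' y) (at y)"
    and m'_cont: "\<And>k. isCont (\<lambda>y. m' y k) z"
    and a: "(a has_derivative a') (at z)"
  shows "a' v \<bullet> m' z w = a' w \<bullet> m' z v"
proof -
  have lin: "bounded_linear a'"
    using a by (rule has_derivative_bounded_linear)
  \<comment> \<open>\<open>\<Phi>'\<close> is differentiable at \<open>z\<close> although \<open>m'\<close> need not be: \<open>m'\<close> only meets the
     first-order remainder of \<open>a\<close> at \<open>z\<close>.\<close>
  define \<Phi> where "\<Phi> y = G y - (a z + a' (y - z)) \<bullet> m y" for y
  define \<Phi>' where "\<Phi>' y k = (a y - a z - a' (y - z)) \<bullet> m' y k - a' k \<bullet> m y" for y k
  have \<Phi>': "(\<Phi> has_derivative \<Phi>' y) (at y)" if "y \<in> U" for y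
  proof -
    have "((\<lambda>y. (a z + a' (y - z)) \<bullet> m y) has_derivative
        (\<lambda>k. a' k \<bullet> m y + (a z + a' (y - z)) \<bullet> m' y k)) (at y)"
      by (rule derivative_eq_intros bounded_linear.has_derivative[OF lin] m that refl)+
        (simp add: inner_commute add.commute)
    from has_derivative_diff[OF G[OF that] this] show ?thesis
      unfolding \<Phi>_def[abs_def] \<Phi>'_def by (simp add: inner_diff_left algebra_simps)
  qed
  have \<Phi>'': "((\<lambda>y. \<Phi>' y k) has_derivative (\<lambda>u. - (a' k \<bullet> m' z u))) (at z)" for k
  proof -
    have "((\<lambda>y. a y - a z - a' (y - z)) has_derivative (\<lambda>_. 0)) (at z)"
      by (auto intro!: derivative_eq_intros a bounded_linear.has_derivative[OF lin])
    then have "((\<lambda>y. (a y - a z - a' (y - z)) \<bullet> m' y k) has_derivative (\<lambda>_. 0)) (at z)"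
      by (rule has_derivative_inner_vanishing) (simp_all add: linear_simps(3)[OF lin] m'_cont)
    moreover have "((\<lambda>y. a' k \<bullet> m y) has_derivative (\<lambda>u. a' k \<bullet> m' z u)) (at z)"
      by (auto intro!: derivative_eq_intros m assms(2))
    ultimately have "((\<lambda>y. (a y - a z - a' (y - z)) \<bullet> m' y k - a' k \<bullet> m y)
        has_derivative (\<lambda>u. 0 - a' k \<bullet> m' z u)) (at z)"
      by (rule has_derivative_diff)
    then show ?thesis
      unfolding \<Phi>'_def by simp
  qed
  show ?thesis
    using second_derivative_symmetric[where f''="\<lambda>u k. - (a' k \<bullet> m' z u)", OF assms(1,2) \<Phi>' \<Phi>'', of v w]
    by simp
qed

lemma has_derivative_eq_sum_partials:
  assumes D: "(f has_derivative D) (at (x, y, z))"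
    and Dx: "((\<lambda>x. f (x, y, z)) has_derivative Dx) (at x)"
    and Dy: "((\<lambda>y. f (x, y, z)) has_derivative Dy) (at y)"
    and Dz: "((\<lambda>z. f (x, y, z)) has_derivative Dz) (at z)"
  shows "D (a, b, c) = Dx a + Dy b + Dz c"
proof -
  have "((\<lambda>x. f (x, y, z)) has_derivative (\<lambda>a. D (a, 0, 0))) (at x)"
    by (rule has_derivative_compose[where f="\<lambda>x. (x, y, z)", OF _ D])
      (auto intro!: derivative_eq_intros simp: zero_prod_def)
  from has_derivative_unique[OF this Dx] have a: "D (a, 0, 0) = Dx a"
    by (rule fun_cong)
  have "((\<lambda>y. f (x, y, z)) has_derivative (\<lambda>b. D (0, b, 0))) (at y)"
    by (rule has_derivative_compose[where f="\<lambda>y. (x, y, z)", OF _ D])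
      (auto intro!: derivative_eq_intros)
  from has_derivative_unique[OF this Dy] have b: "D (0, b, 0) = Dy b"
    by (rule fun_cong)
  have "((\<lambda>z. f (x, y, z)) has_derivative (\<lambda>c. D (0, 0, c))) (at z)"
    by (rule has_derivative_compose[where f="\<lambda>z. (x, y, z)", OF _ D])
      (auto intro!: derivative_eq_intros)
  from has_derivative_unique[OF this Dz] have c: "D (0, 0, c) = Dz c"
    by (rule fun_cong)
  have "D (a, b, c) = D ((a, 0, 0) + (0, b, 0) + (0, 0, c))"
    by simp
  then show ?thesis
    by (simp only: linear_add[OF has_derivative_linear[OF D]] a b c)
qed

lemma Hd_differentiable:
  assumes "fd differentiable (at (x, u))" "gd differentiable (at (x, u))"
  shows "(\<lambda>t. Hd fd gd (fst t) (fst (snd t)) (snd (snd t))) differentiable (at (x, p, u))"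
proof -
  obtain fD gD where "(fd has_derivative fD) (at (x, u))" "(gd has_derivative gD) (at (x, u))"
    using assms unfolding differentiable_def by blast
  then show ?thesis
    unfolding differentiable_def Hd_def
    by (auto intro!: derivative_eq_intros exI has_derivative_compose[where f="\<lambda>t. (fst t, snd (snd t))"])
qed

definition midpoint_conditions ::
  "((real^'n) \<times> (real^'m) \<Rightarrow> real^'n) \<Rightarrow> ((real^'n) \<times> (real^'m) \<Rightarrow> real) \<Rightarrow> real
    \<Rightarrow> ((real^'n) \<times> (real^'n) \<Rightarrow> (real^'n) \<times> (real^'n)) \<Rightarrow> ((real^'n) \<times> (real^'n) \<Rightarrow> real^'m)
    \<Rightarrow> (real^'n) \<times> (real^'n) \<Rightarrow> bool" where
  "midpoint_conditions fd gd \<tau> F w y \<longleftrightarrow>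
    (let xk = fst y; pk = snd y; xk1 = fst (F y); pk1 = snd (F y);
         xd = (1/2) *\<^sub>R (xk1 + xk); pd = (1/2) *\<^sub>R (pk1 + pk); ud = w y
     in ((\<lambda>p. Hd fd gd xd p ud) has_derivative (\<lambda>v. ((1/\<tau>) *\<^sub>R (xk1 - xk)) \<bullet> v)) (at pd)
      \<and> ((\<lambda>x. Hd fd gd x pd ud) has_derivative (\<lambda>v. (- ((1/\<tau>) *\<^sub>R (pk1 - pk))) \<bullet> v)) (at xd)
      \<and> ((\<lambda>u. Hd fd gd xd pd u) has_derivative (\<lambda>v. 0)) (at ud))"

lemma midpoint_conditions_exact:
  fixes F :: "(real^'n) \<times> (real^'n) \<Rightarrow> (real^'n) \<times> (real^'n)"
  assumes "\<And>q. fd differentiable (at q)" "\<And>q. gd differentiable (at q)" "\<tau> \<noteq> 0"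
    and F: "(F has_derivative F') (at y)" and w: "(w has_derivative w') (at y)"
    and conds: "midpoint_conditions fd gd \<tau> F w y"
  shows "((\<lambda>y. \<tau> * Hd fd gd (fst ((1/2) *\<^sub>R (F y + y))) (snd ((1/2) *\<^sub>R (F y + y))) (w y))
    has_derivative (\<lambda>k. (snd y - snd (F y), fst (F y) - fst y) \<bullet> ((1/2) *\<^sub>R (F' k + k)))) (at y)"
proof -
  obtain x p x1 p1 where y: "y = (x, p)" and F_y: "F (x, p) = (x1, p1)"
    by (metis prod.collapse)
  define xd where "xd = (1/2) *\<^sub>R (x1 + x)"
  define pd where "pd = (1/2) *\<^sub>R (p1 + p)"
  define ud where "ud = w y"
  define H where "H t = Hd fd gd (fst t) (fst (snd t)) (snd (snd t))" for t
  have Dp: "((\<lambda>p. H (xd, p, ud)) has_derivative (\<lambda>v. ((1/\<tau>) *\<^sub>R (x1 - x)) \<bullet> v)) (at pd)"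
    and Dx: "((\<lambda>x. H (x, pd, ud)) has_derivative (\<lambda>v. (- ((1/\<tau>) *\<^sub>R (p1 - p))) \<bullet> v)) (at xd)"
    and Du: "((\<lambda>u. H (xd, pd, u)) has_derivative (\<lambda>v. 0)) (at ud)"
    using conds by (simp_all add: midpoint_conditions_def Let_def y F_y H_def xd_def pd_def ud_def)
  obtain D where D: "(H has_derivative D) (at (xd, pd, ud))"
    using Hd_differentiable[OF assms(1,2)] unfolding H_def[abs_def] differentiable_def by blast
  have "((\<lambda>y. (fst ((1/2) *\<^sub>R (F y + y)), snd ((1/2) *\<^sub>R (F y + y)), w y)) has_derivative
      (\<lambda>k. (fst ((1/2) *\<^sub>R (F' k + k)), snd ((1/2) *\<^sub>R (F' k + k)), w' k))) (at y)"
    by (auto intro!: derivative_eq_intros F w)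
  from has_derivative_compose[OF this, of H D] D
  have "((\<lambda>y. H (fst ((1/2) *\<^sub>R (F y + y)), snd ((1/2) *\<^sub>R (F y + y)), w y)) has_derivative
      (\<lambda>k. D (fst ((1/2) *\<^sub>R (F' k + k)), snd ((1/2) *\<^sub>R (F' k + k)), w' k))) (at y)"
    by (simp add: y F_y xd_def pd_def ud_def)
  from has_derivative_mult_right[OF this, of \<tau>] show ?thesis
    using has_derivative_eq_sum_partials[OF D Dx Dp Du] \<open>\<tau> \<noteq> 0\<close>
    by (simp add: H_def y F_y inner_prod_def inner_diff_left algebra_simps)
qed

lemma omega_preserved_iff_midpoint_symmetric:
  fixes v w v' w' :: "(real^'n) \<times> (real^'n)"
  shows "(snd v - snd v', fst v' - fst v) \<bullet> ((1/2) *\<^sub>R (w' + w))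
      = (snd w - snd w', fst w' - fst w) \<bullet> ((1/2) *\<^sub>R (v' + v))
    \<longleftrightarrow> omega v' w' = omega v w"
  by (auto simp: omega_def inner_prod_def inner_add_left inner_add_right inner_diff_left inner_diff_right
      inner_commute algebra_simps)

lemma omega_preserved_if_midpoint_form_exact:
  fixes F :: "(real^'n) \<times> (real^'n) \<Rightarrow> (real^'n) \<times> (real^'n)"
  assumes "open W" "z \<in> W"
    and F': "\<And>y. y \<in> W \<Longrightarrow> (F has_derivative blinfun_apply (F' y)) (at y)" and "isCont F' z"
    and G: "\<And>y. y \<in> W \<Longrightarrow> (G has_derivative
      (\<lambda>k. (snd y - snd (F y), fst (F y) - fst y) \<bullet> ((1/2) *\<^sub>R (F' y k + k)))) (at y)"
  shows "omega (F' z v) (F' z v') = omega v v'"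
proof -
  have a: "((\<lambda>y. (snd y - snd (F y), fst (F y) - fst y)) has_derivative
      (\<lambda>k. (snd k - snd (F' z k), fst (F' z k) - fst k))) (at z)"
    by (auto intro!: derivative_eq_intros F' \<open>z \<in> W\<close>)
  have m: "((\<lambda>y. (1/2) *\<^sub>R (F y + y)) has_derivative (\<lambda>k. (1/2) *\<^sub>R (F' y k + k))) (at y)"
    if "y \<in> W" for y
    by (auto intro!: derivative_eq_intros F' that)
  have m'_cont: "isCont (\<lambda>y. (1/2) *\<^sub>R (F' y k + k)) z" for k
    using \<open>isCont F' z\<close> by (intro continuous_intros)
  from exact_inner_form_closed[OF assms(1,2) G m m'_cont a, of v v'] show ?thesis
    by (rule omega_preserved_iff_midpoint_symmetric[THEN iffD1])
qed

theorem mainTheorem9: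
  fixes fd :: "(real^'n) \<times> (real^'m) \<Rightarrow> real^'n"
    and gd :: "(real^'n) \<times> (real^'m) \<Rightarrow> real"
    and \<tau> :: real
    and W :: "((real^'n) \<times> (real^'n)) set"
    and F :: "(real^'n) \<times> (real^'n) \<Rightarrow> (real^'n) \<times> (real^'n)"
    and w :: "(real^'n) \<times> (real^'n) \<Rightarrow> real^'m"
  assumes "C1_on UNIV fd" and "C1_on UNIV gd" and "\<tau> > 0"
    and "open W" and "C1_on W F" and "C1_on W w"
    and eqs: "\<And>xk pk. (xk, pk) \<in> W \<Longrightarrow>
      (let xk1 = fst (F (xk, pk)); pk1 = snd (F (xk, pk));
           xd = (1/2) *\<^sub>R (xk1 + xk); pd = (1/2) *\<^sub>R (pk1 + pk); ud = w (xk, pk)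
       in ((\<lambda>p. Hd fd gd xd p ud) has_derivative (\<lambda>v. ((1/\<tau>) *\<^sub>R (xk1 - xk)) \<bullet> v)) (at pd)
        \<and> ((\<lambda>x. Hd fd gd x pd ud) has_derivative (\<lambda>v. (- ((1/\<tau>) *\<^sub>R (pk1 - pk))) \<bullet> v)) (at xd)
        \<and> ((\<lambda>u. Hd fd gd xd pd u) has_derivative (\<lambda>v. 0)) (at ud))"
  shows "symplectic_on W F"
  unfolding symplectic_on_def
proof (intro ballI allI)
  fix z v v' assume "z \<in> W"
  have fd: "\<And>q. fd differentiable (at q)" and gd: "\<And>q. gd differentiable (at q)"
    using assms(1,2) unfolding C1_on_def differentiable_def by blast+
  obtain F' where F': "\<And>y. y \<in> W \<Longrightarrow> (F has_derivative blinfun_apply (F' y)) (at y)"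
    and "continuous_on W F'"
    using assms(5) unfolding C1_on_def by blast
  obtain w' where w': "\<And>y. y \<in> W \<Longrightarrow> (w has_derivative blinfun_apply (w' y)) (at y)"
    using assms(6) unfolding C1_on_def by blast
  have conds: "midpoint_conditions fd gd \<tau> F w y" if "y \<in> W" for y
    using eqs[of "fst y" "snd y"] that by (simp add: midpoint_conditions_def)
  have "isCont F' z"
    using \<open>continuous_on W F'\<close> \<open>open W\<close> \<open>z \<in> W\<close> by (simp add: continuous_on_eq_continuous_at)
  have G: "((\<lambda>y. \<tau> * Hd fd gd (fst ((1/2) *\<^sub>R (F y + y))) (snd ((1/2) *\<^sub>R (F y + y))) (w y))
      has_derivative (\<lambda>k. (snd y - snd (F y), fst (F y) - fst y) \<bullet> ((1/2) *\<^sub>R (F' y k + k)))) (at y)"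
    if "y \<in> W" for y
    using \<open>\<tau> > 0\<close> by (intro midpoint_conditions_exact[OF fd gd _ F' w'] conds that) auto
  from omega_preserved_if_midpoint_form_exact[OF \<open>open W\<close> \<open>z \<in> W\<close> F' \<open>isCont F' z\<close> G]
  show "omega (frechet_derivative F (at z) v) (frechet_derivative F (at z) v') = omega v v'"
    using frechet_derivative_at[OF F'[OF \<open>z \<in> W\<close>]] by simp
qed

end
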